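(* Consider the noisy search problem in the context, and suppose every query is a discrete interval, $S_n\in\mathcal{I}$ for $n=1,\dots,t$, with uniform prior $\pi_i(0)=\delta$. Then the posterior $\pi(t)$ is piecewise constant on at most $2t+1$ intervals: there exist $k\le 2t+1$ pairwise disjoint sets $J_1,\dots,J_k\in\mathcal{I}$ with $\bigcup_u J_u=\{1,\dots,1/\delta\}$ such that $$\pi_i(t)=\sum_{u=1}^{k}\frac{\pi_{J_u}(t)}{|J_u|}\mathbb{1}_{J_u}(i)\quad\text{for all } i.$$
   Context: Search problem: fix $\delta\in(0,1)$ with $N=1/\delta$ an integer. A target index $\theta$ is uniform on $\{1,\dots,N\}$. A noise profile $p:(0,1)\to(0,1/2)$ is continuous and non-decreasing. At each time $n$ a query set $S_n\subseteq\{1,\dots,N\}$ is chosen as a function of past queries/observations and one observes $Y_n=\mathbb{1}(\theta\in S_n)\oplus Z_n$, where conditionally on $S_n$, $Z_n\sim\mathrm{Bern}(p(\delta|S_n|))$, conditionally i.i.d. across time. The posterior is $\pi_i(t)=\mathbb{P}(\theta=i\mid S_1^t,Y_1^t)$, and $\pi_S=\sum_{i\in S}\pi_i$. $\mathcal{I}=\{\{i:a\le i\le b\}:1\le a\le b\le N\}$ is the collection of discrete intervals. *)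

theory Defs
  imports "HOL-Analysis.Analysis"
begin

definition intervals :: "nat \<Rightarrow> nat set set" where
  "intervals N = {{a..b} | a b. 1 \<le> a \<and> a \<le> b \<and> b \<le> N}"

text \<open>Likelihood P(Y = y | theta = i, query S): Y = 1(theta in S) xor Z,
  Z ~ Bern(p(delta |S|)) with delta = 1/N.\<close>
definition lik :: "(real \<Rightarrow> real) \<Rightarrow> nat \<Rightarrow> nat set \<Rightarrow> bool \<Rightarrow> nat \<Rightarrow> real" where
  "lik p N S y i = (if y \<noteq> (i \<in> S) then p (real (card S) / real N)
                    else 1 - p (real (card S) / real N))"

primrec posterior ::
  "(real \<Rightarrow> real) \<Rightarrow> nat \<Rightarrow> (nat \<Rightarrow> nat set) \<Rightarrow> (nat \<Rightarrow> bool) \<Rightarrow> nat \<Rightarrow> nat \<Rightarrow> real" where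
  "posterior p N S Y 0 i = (if i \<in> {1..N} then 1 / real N else 0)"
| "posterior p N S Y (Suc t) i =
     posterior p N S Y t i * lik p N (S (Suc t)) (Y (Suc t)) i /
     (\<Sum>j\<in>{1..N}. posterior p N S Y t j * lik p N (S (Suc t)) (Y (Suc t)) j)"

end

theory Submission
  imports Defs
begin

text \<open>The likelihood of an observation depends on the target i only through the bit
  \<open>i \<in> S\<close>. Hence two targets lying in exactly the same query sets keep equal posterior
  mass forever. The endpoints a and b + 1 of the t query intervals, together with 1 and
  N + 1, cut {1..N} into at most 2t + 1 consecutive intervals, none of which is split by a
  query interval; so the posterior is constant on each of them and therefore equal to its
  average there.\<close>

lemma posterior_outside:
  "i \<notin> {1..N} \<Longrightarrow> posterior p N S Y t i = 0"
  by (induction t) auto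

lemma posterior_eq_if_same_membership:
  assumes "i \<in> {1..N}" "i' \<in> {1..N}" "\<forall>s\<in>{1..t}. i \<in> S s \<longleftrightarrow> i' \<in> S s"
  shows "posterior p N S Y t i = posterior p N S Y t i'"
  using assms
proof (induction t)
  case 0
  then show ?case by simp
next
  case (Suc t)
  then have "posterior p N S Y t i = posterior p N S Y t i'" by auto
  moreover have "lik p N (S (Suc t)) (Y (Suc t)) i = lik p N (S (Suc t)) (Y (Suc t)) i'"
    using Suc.prems(3) by (auto simp: lik_def)
  ultimately show ?case by simp
qed

definition block :: "'a::linorder list \<Rightarrow> nat \<Rightarrow> 'a set" where
  "block xs u = {xs ! (u - 1) ..< xs ! u}"

lemma block_nonempty:
  assumes "sorted_wrt (<) xs" "1 \<le> u" "u < length xs"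
  shows "block xs u \<noteq> {}"
  using sorted_wrt_nth_less[OF assms(1), of "u - 1" u] assms(2,3) by (simp add: block_def)

lemma disjoint_family_on_block:
  assumes "sorted xs"
  shows "disjoint_family_on (block xs) {..<length xs}"
proof -
  have "block xs u \<inter> block xs v = {}" if "u < v" "v < length xs" for u v
  proof -
    have "xs ! u \<le> xs ! (v - 1)"
      using sorted_nth_mono[OF assms] that by simp
    then show ?thesis by (auto simp: block_def)
  qed
  then show ?thesis
    unfolding disjoint_family_on_def by (metis Int_commute lessThan_iff linorder_neqE_nat)
qed

lemma block_not_split:
  assumes "sorted xs" "c \<in> set xs" "u < length xs" "x \<in> block xs u" "y \<in> block xs u"
  shows "x < c \<longleftrightarrow> y < c"
proof -
  obtain v where v: "v < length xs" "c = xs ! v"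
    using assms(2) by (metis in_set_conv_nth)
  show ?thesis
  proof (cases "v < u")
    case True
    then have "c \<le> xs ! (u - 1)"
      using sorted_nth_mono[OF assms(1)] v assms(3) by simp
    then show ?thesis using assms(4,5) by (auto simp: block_def)
  next
    case False
    then have "xs ! u \<le> c"
      using sorted_nth_mono[OF assms(1)] v by simp
    then show ?thesis using assms(4,5) by (auto simp: block_def)
  qed
qed

lemma mem_block_if_between:
  assumes "sorted xs" "c \<in> set xs" "c \<le> x" "d \<in> set xs" "x < d"
  shows "\<exists>u\<in>{1..<length xs}. x \<in> block xs u"
proof -
  obtain w where w: "w < length xs" "x < xs ! w"
    using assms(4,5) by (metis in_set_conv_nth)
  define u where "u = (LEAST v. x < xs ! v)"
  have above: "x < xs ! u"
    unfolding u_def using w(2) by (rule LeastI)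
  have "u \<le> w"
    unfolding u_def using w(2) by (rule Least_le)
  have "xs ! 0 \<le> c"
    using assms(2) sorted_nth_mono[OF assms(1), of 0] by (metis in_set_conv_nth le0)
  then have "u \<noteq> 0" using above assms(3) by (metis leD order.trans)
  then have "xs ! (u - 1) \<le> x"
    using not_less_Least[of "u - 1" "\<lambda>v. x < xs ! v"] unfolding u_def by fastforce
  then show ?thesis
    using above \<open>u \<le> w\<close> \<open>u \<noteq> 0\<close> w(1) by (auto simp: block_def)
qed

lemma Union_block_eq:
  assumes "sorted xs" "lo \<in> set xs" "hi \<in> set xs" "set xs \<subseteq> {lo..hi}"
  shows "(\<Union>u\<in>{1..<length xs}. block xs u) = {lo..<hi}"
proof (intro equalityI subsetI)
  fix x assume "x \<in> (\<Union>u\<in>{1..<length xs}. block xs u)"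
  then obtain u where u: "u \<in> {1..<length xs}" "xs ! (u - 1) \<le> x" "x < xs ! u"
    by (auto simp: block_def)
  then have "xs ! (u - 1) \<in> set xs" "xs ! u \<in> set xs" by auto
  then have "lo \<le> xs ! (u - 1)" "xs ! u \<le> hi" using assms(4) by auto
  with u(2,3) show "x \<in> {lo..<hi}"
    by (meson atLeastLessThan_iff order.strict_trans2 order.trans)
next
  fix x assume "x \<in> {lo..<hi}"
  then show "x \<in> (\<Union>u\<in>{1..<length xs}. block xs u)"
    using mem_block_if_between[OF assms(1,2) _ assms(3)] by auto
qed

lemma eq_sum_block_averages:
  fixes f :: "'a \<Rightarrow> 'b::field_char_0"
  assumes "finite U" "\<And>u. u \<in> U \<Longrightarrow> finite (J u) \<and> J u \<noteq> {}"
    and "disjoint_family_on J U"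
    and "\<And>u x y. u \<in> U \<Longrightarrow> x \<in> J u \<Longrightarrow> y \<in> J u \<Longrightarrow> f x = f y"
    and "\<And>x. x \<notin> (\<Union>u\<in>U. J u) \<Longrightarrow> f x = 0"
  shows "f i = (\<Sum>u\<in>U. (\<Sum>j\<in>J u. f j) / of_nat (card (J u)) * indicator (J u) i)"
proof (cases "i \<in> (\<Union>u\<in>U. J u)")
  case True
  then obtain u0 where u0: "u0 \<in> U" "i \<in> J u0" by blast
  have "i \<notin> J u" if "u \<in> U - {u0}" for u
    using assms(3) u0 that unfolding disjoint_family_on_def by blast
  then have rest: "(\<Sum>u\<in>U - {u0}. (\<Sum>j\<in>J u. f j) / of_nat (card (J u)) * indicator (J u) i) = 0"
    by (intro sum.neutral) simp
  have "(\<Sum>u\<in>U. (\<Sum>j\<in>J u. f j) / of_nat (card (J u)) * indicator (J u) i)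
      = (\<Sum>j\<in>J u0. f j) / of_nat (card (J u0)) * indicator (J u0) i
        + (\<Sum>u\<in>U - {u0}. (\<Sum>j\<in>J u. f j) / of_nat (card (J u)) * indicator (J u) i)"
    by (rule sum.remove[OF assms(1) u0(1)])
  also have "\<dots> = (\<Sum>j\<in>J u0. f j) / of_nat (card (J u0))"
    using rest u0(2) by simp
  also have "(\<Sum>j\<in>J u0. f j) = (\<Sum>j\<in>J u0. f i)"
    using assms(4)[OF u0(1) _ u0(2)] by (intro sum.cong) auto
  finally show ?thesis
    using assms(2)[OF u0(1)] by simp
next
  case False
  then show ?thesis using assms(5) by (auto intro!: sum.neutral)
qed

lemma block_in_intervals:
  assumes "sorted_wrt (<) xs" "set xs \<subseteq> {1..Suc N}" "u \<in> {1..<length xs}"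
  shows "block xs u \<in> intervals N"
proof -
  have "xs ! (u - 1) < xs ! u"
    using sorted_wrt_nth_less[OF assms(1), of "u - 1" u] assms(3) by auto
  moreover have "xs ! (u - 1) \<in> set xs" "xs ! u \<in> set xs"
    using assms(3) by auto
  ultimately have "1 \<le> xs ! (u - 1)" "xs ! (u - 1) < xs ! u" "xs ! u \<le> Suc N"
    using assms(2) by auto
  then show ?thesis
    unfolding intervals_def block_def
    by (intro CollectI exI[of _ "xs ! (u - 1)"] exI[of _ "xs ! u - 1"])
      (auto simp: atLeastLessThan_eq_atLeastAtMost_diff)
qed

lemma posterior_constant_on_block:
  assumes "sorted xs" "u < length xs" "block xs u \<subseteq> {1..N}"
    and "\<forall>s\<in>{1..t}. \<exists>a b. S s = {a..b} \<and> a \<in> set xs \<and> Suc b \<in> set xs"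
    and "x \<in> block xs u" "y \<in> block xs u"
  shows "posterior p N S Y t x = posterior p N S Y t y"
proof (rule posterior_eq_if_same_membership)
  show "x \<in> {1..N}" "y \<in> {1..N}" using assms(3,5,6) by auto
  show "\<forall>s\<in>{1..t}. x \<in> S s \<longleftrightarrow> y \<in> S s"
  proof
    fix s assume "s \<in> {1..t}"
    then obtain a b where "S s = {a..b}" "a \<in> set xs" "Suc b \<in> set xs"
      using assms(4) by blast
    moreover from this have "x < a \<longleftrightarrow> y < a" "x < Suc b \<longleftrightarrow> y < Suc b"
      using block_not_split[OF assms(1) _ assms(2,5,6)] by blast+
    ultimately show "x \<in> S s \<longleftrightarrow> y \<in> S s" by auto
  qed
qed

lemma posterior_block_decomposition:
  assumes "sorted_wrt (<) xs" "1 \<in> set xs" "Suc N \<in> set xs" "set xs \<subseteq> {1..Suc N}"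
    and endpoints: "\<forall>s\<in>{1..t}. \<exists>a b. S s = {a..b} \<and> a \<in> set xs \<and> Suc b \<in> set xs"
  defines "U \<equiv> {1..<length xs}"
  shows "(\<forall>u\<in>U. block xs u \<in> intervals N) \<and> disjoint_family_on (block xs) U
    \<and> (\<Union>u\<in>U. block xs u) = {1..N}
    \<and> (\<forall>i. posterior p N S Y t i =
          (\<Sum>u\<in>U. (\<Sum>j\<in>block xs u. posterior p N S Y t j) / real (card (block xs u))
                   * indicator (block xs u) i))"
proof (intro conjI allI)
  have "sorted xs" using assms(1) by (simp add: strict_sorted_imp_sorted)
  show "\<forall>u\<in>U. block xs u \<in> intervals N"
    unfolding U_def using block_in_intervals[OF assms(1,4)] by blast
  show disjoint: "disjoint_family_on (block xs) U"
    unfolding U_def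
    by (rule disjoint_family_on_mono[OF _ disjoint_family_on_block[OF \<open>sorted xs\<close>]]) auto
  show union: "(\<Union>u\<in>U. block xs u) = {1..N}"
    unfolding U_def Union_block_eq[OF \<open>sorted xs\<close> assms(2-4)] by auto
  fix i
  show "posterior p N S Y t i =
      (\<Sum>u\<in>U. (\<Sum>j\<in>block xs u. posterior p N S Y t j) / real (card (block xs u))
               * indicator (block xs u) i)"
  proof (rule eq_sum_block_averages[OF _ _ disjoint])
    show "finite U" by (simp add: U_def)
    show "finite (block xs u) \<and> block xs u \<noteq> {}" if "u \<in> U" for u
      using block_nonempty[OF assms(1)] that by (auto simp: block_def U_def)
    show "posterior p N S Y t x = posterior p N S Y t y"
      if "u \<in> U" "x \<in> block xs u" "y \<in> block xs u" for u x y
    proof (rule posterior_constant_on_block[OF \<open>sorted xs\<close> _ _ endpoints that(2,3)])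
      show "u < length xs" using that(1) by (simp add: U_def)
      show "block xs u \<subseteq> {1..N}" using that(1) union by blast
    qed
    show "posterior p N S Y t x = 0" if "x \<notin> (\<Union>u\<in>U. block xs u)" for x
      using that unfolding union by (rule posterior_outside)
  qed
qed

theorem lemma1:
  fixes N t :: nat and p :: "real \<Rightarrow> real" and S :: "nat \<Rightarrow> nat set" and Y :: "nat \<Rightarrow> bool"
  assumes "N \<ge> 2"
    and "continuous_on {0<..<1} p"
    and "mono_on {0<..<1} p"
    and "\<forall>x\<in>{0<..<1}. 0 < p x \<and> p x < 1/2"
    and "\<forall>n\<in>{1..t}. S n \<in> intervals N"
  shows "\<exists>k J. k \<le> 2 * t + 1
    \<and> (\<forall>u\<in>{1..k}. J u \<in> intervals N)
    \<and> (\<forall>u\<in>{1..k}. \<forall>v\<in>{1..k}. u \<noteq> v \<longrightarrow> J u \<inter> J v = {})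
    \<and> (\<Union>u\<in>{1..k}. J u) = {1..N}
    \<and> (\<forall>i. posterior p N S Y t i =
          (\<Sum>u=1..k. (\<Sum>j\<in>J u. posterior p N S Y t j) / real (card (J u))
                        * indicator (J u) i))"
proof -
  have "\<forall>n\<in>{1..t}. \<exists>a b. S n = {a..b} \<and> 1 \<le> a \<and> a \<le> b \<and> b \<le> N"
    using assms(5) by (auto simp: intervals_def)
  then obtain a b where ab: "\<And>n. n \<in> {1..t} \<Longrightarrow> S n = {a n..b n} \<and> 1 \<le> a n \<and> a n \<le> b n \<and> b n \<le> N"
    by metis
  define F where "F = {1, Suc N} \<union> a ` {1..t} \<union> Suc ` b ` {1..t}"
  define xs where "xs = sorted_list_of_set F"
  have "finite F" by (simp add: F_def)
  then have xs: "sorted_wrt (<) xs" "set xs = F" "length xs = card F"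
    by (simp_all add: xs_def)
  have "card F \<le> card {1, Suc N} + card (a ` {1..t}) + card (Suc ` b ` {1..t})"
    unfolding F_def by (intro card_Un_le[THEN order_trans] add_mono) auto
  also have "\<dots> \<le> 2 + t + t"
    by (intro add_mono card_image_le[THEN order_trans]) (auto simp: card_insert_if)
  finally have "length xs - 1 \<le> 2 * t + 1" using xs(3) by simp
  have breakpoints: "1 \<in> set xs" "Suc N \<in> set xs" "set xs \<subseteq> {1..Suc N}"
    using ab by (fastforce simp: xs(2) F_def)+
  have endpoints: "\<forall>s\<in>{1..t}. \<exists>a b. S s = {a..b} \<and> a \<in> set xs \<and> Suc b \<in> set xs"
    using ab by (auto simp: xs(2) F_def)
  have indices: "{1..<length xs} = {1..length xs - 1}" by auto
  show ?thesis
    using posterior_block_decomposition[OF xs(1) breakpoints endpoints, of p Y, unfolded indices]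
      \<open>length xs - 1 \<le> 2 * t + 1\<close>
    unfolding disjoint_family_on_def by blast
qed

end
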